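(* Let $R$ be an integral domain, $f \in R[X]$ a monic polynomial, and $f = \prod_{i=1}^n f_i$ a factorisation of $f$ into monic polynomials $f_i \in R[X]$. Let $\Psi_f : R[X]/(f) \to \bigoplus_{i=1}^n R[X]/(f_i)$ be the natural map $h \bmod f \mapsto \bigoplus_i h \bmod f_i$. Then the determinant of $\Psi_f$ written with respect to the standard bases is \[\det(\Psi_f) = \prod_{1 \le i < j \le n}\mathcal{R}(f_j, f_i).\]
   Context: The standard basis of $R[X]/(g)$ for monic $g$ of degree $d$ is $(1, \overline{X}, \dots, \overline{X}^{d-1})$; the summands of $\bigoplus_{i=1}^n R[X]/(f_i)$ are taken in the order $i = 1, \dots, n$. For monic polynomials $g,h$, the resultant is $\mathcal{R}(g,h) = \prod_{\alpha}\prod_{\beta}(\alpha-\beta)$, the product over the roots $\alpha$ of $g$ and $\beta$ of $h$ (with multiplicity) in an algebraic closure of the fraction field of $R$; it lies in $R$. *)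

theory Defs
  imports "Subresultants.Resultant_Prelim"
begin

text \<open>Offset of the i-th summand in the concatenated standard basis of
  the direct sum of the R[X]/(f_i), i = 0..n-1 (0-based).\<close>
definition block_off :: "'a::zero poly list \<Rightarrow> nat \<Rightarrow> nat" where
  "block_off fs i = sum_list (map degree (take i fs))"

text \<open>Matrix of Psi_f : R[X]/(f) -> (+)_i R[X]/(f_i), f = prod fs, w.r.t. the standard
  bases. Column c is the image of X^c (c < deg f); the row r lies in the block i with
  block_off fs i \<le> r < block_off fs (i+1) and gives the coefficient of X^(r - block_off fs i)
  of the remainder of X^c modulo f_i. For monic f_i the library's pseudo_mod is exactly
  the Euclidean remainder. The size is sum of deg f_i = deg f (the f_i are monic).\<close>
definition psi_mat :: "'a::idom poly list \<Rightarrow> 'a mat" where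
  "psi_mat fs =
     mat (sum_list (map degree fs)) (sum_list (map degree fs))
       (\<lambda>(r, c). let i = (THE i. i < length fs \<and> block_off fs i \<le> r \<and> r < block_off fs (Suc i))
                 in coeff (pseudo_mod (monom 1 c) (fs ! i)) (r - block_off fs i))"

end

theory Submission
  imports Defs "Subresultants.Subresultant"
begin

text \<open>Write \<open>f = g G\<close> with \<open>g\<close> the first factor, \<open>d = deg g\<close>, \<open>N = deg f\<close>. Replacing the
  standard basis of \<open>R[X]/(f)\<close> by \<open>1, \<dots>, X\<^sup>d\<^sup>-\<^sup>1, g, X g, \<dots>, X\<^sup>N\<^sup>-\<^sup>d\<^sup>-\<^sup>1 g\<close> is a
  unitriangular change of basis, after which \<open>\<Psi>\<^sub>f\<close> is block lower triangular: the first \<open>d\<close>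
  vectors go to the standard basis of \<open>R[X]/(g)\<close>, while the vectors \<open>X\<^sup>k g\<close> vanish
  modulo \<open>g\<close> and are mapped by \<open>\<Psi>\<^sub>G\<close> composed with multiplication by \<open>g\<close> on \<open>R[X]/(G)\<close>.
  For monic \<open>G\<close> the determinant of multiplication by \<open>g\<close> on \<open>R[X]/(G)\<close> is \<open>\<R>(G, g)\<close>:
  column operations with the columns \<open>X\<^sup>k G\<close> of the Sylvester matrix reduce it to that
  multiplication matrix. This description makes the resultant multiplicative, so
  \<open>\<R>(G, g) = \<Prod>\<^sub>j \<R>(f\<^sub>j, g)\<close>, and induction on the number of factors gives the formula.\<close>

section \<open>Remainders modulo a monic polynomial\<close>

lemma pseudo_divmod_monic:
  fixes g p :: "'a::idom poly"
  assumes g: "monic g" and qr: "pseudo_divmod p g = (q, r)"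
  shows "p = g * q + r"
proof -
  have "g \<noteq> 0" using g by auto
  from pseudo_divmod(1)[OF this qr] g show ?thesis by simp
qed

lemma pseudo_mod_monic_dvd:
  fixes g p :: "'a::idom poly"
  assumes "monic g"
  shows "g dvd p - pseudo_mod p g"
proof -
  obtain q r where qr: "pseudo_divmod p g = (q, r)" by fastforce
  then have "p - pseudo_mod p g = g * q"
    using pseudo_divmod_monic[OF assms qr] by (simp add: pseudo_mod_def)
  then show ?thesis by simp
qed

lemma coeff_pseudo_mod_monic_eq_0:
  fixes g p :: "'a::idom poly"
  assumes "monic g" and "degree g \<le> k"
  shows "coeff (pseudo_mod p g) k = 0"
proof -
  have "g \<noteq> 0" using assms(1) by auto
  from pseudo_mod(2)[OF this, of p] assms(2) show ?thesis by (auto intro: coeff_eq_0)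
qed

lemma pseudo_mod_monic_eqI:
  fixes g p r :: "'a::idom poly"
  assumes g: "monic g" and r: "\<And>k. degree g \<le> k \<Longrightarrow> coeff r k = 0"
    and dvd: "g dvd p - r"
  shows "pseudo_mod p g = r"
proof -
  let ?d = "pseudo_mod p g - r"
  have "?d = (p - r) - (p - pseudo_mod p g)" by simp
  then have "g dvd ?d" using dvd_diff[OF dvd pseudo_mod_monic_dvd[OF g, of p]] by simp
  moreover have high: "coeff ?d k = 0" if "degree g \<le> k" for k
    using r[OF that] coeff_pseudo_mod_monic_eq_0[OF g that] by simp
  ultimately have "?d = 0"
    using dvd_imp_degree_le[of g ?d] high[of "degree ?d"] g by fastforce
  then show ?thesis by simp
qed

lemma pseudo_mod_monic_cong:
  fixes g p q :: "'a::idom poly"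
  assumes g: "monic g" and "g dvd p - q"
  shows "pseudo_mod p g = pseudo_mod q g"
proof (rule pseudo_mod_monic_eqI[OF g])
  show "coeff (pseudo_mod q g) k = 0" if "degree g \<le> k" for k
    using coeff_pseudo_mod_monic_eq_0[OF g that] .
  have "p - pseudo_mod q g = (p - q) + (q - pseudo_mod q g)" by simp
  then show "g dvd p - pseudo_mod q g"
    using dvd_add[OF assms(2) pseudo_mod_monic_dvd[OF g, of q]] by simp
qed

lemma pseudo_mod_monic_small:
  fixes g p :: "'a::idom poly"
  assumes "monic g" and "degree p < degree g"
  shows "pseudo_mod p g = p"
  by (rule pseudo_mod_monic_eqI) (use assms in \<open>auto intro: coeff_eq_0\<close>)

lemma pseudo_mod_monic_multiple:
  fixes g p :: "'a::idom poly"
  assumes "monic g"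
  shows "pseudo_mod (p * g) g = 0"
  by (rule pseudo_mod_monic_eqI) (use assms in auto)

section \<open>Coefficient matrices of linear maps\<close>

definition poly_linear :: "('a::comm_ring_1 poly \<Rightarrow> 'a poly) \<Rightarrow> bool" where
  "poly_linear \<phi> \<longleftrightarrow>
    (\<forall>p q. \<phi> (p + q) = \<phi> p + \<phi> q) \<and> (\<forall>c p. \<phi> (smult c p) = smult c (\<phi> p))"

lemma poly_linear_sum:
  assumes "poly_linear \<phi>"
  shows "\<phi> (\<Sum>i\<in>A. f i) = (\<Sum>i\<in>A. \<phi> (f i))"
proof -
  have "\<phi> 0 = 0" using assms unfolding poly_linear_def by (metis smult_0_left)
  then show ?thesis
    using assms by (induction A rule: infinite_finite_induct) (auto simp: poly_linear_def)
qed

lemma poly_linear_monom_expansion: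
  assumes "poly_linear \<phi>" and "\<And>i. k \<le> i \<Longrightarrow> coeff h i = 0"
  shows "\<phi> h = (\<Sum>l<k. smult (coeff h l) (\<phi> (monom 1 l)))"
proof -
  have "h = (\<Sum>l<k. smult (coeff h l) (monom 1 l))"
  proof (rule poly_eqI)
    fix i
    have "(\<Sum>l<k. coeff h l * (if l = i then 1 else 0)) = (if i < k then coeff h i else 0)"
      by (simp add: if_distrib[of "(*) _"] cong: if_cong)
    then show "coeff h i = coeff (\<Sum>l<k. smult (coeff h l) (monom 1 l)) i"
      using assms(2)[of i] by (simp add: coeff_sum)
  qed
  then have "\<phi> h = (\<Sum>l<k. \<phi> (smult (coeff h l) (monom 1 l)))"
    using poly_linear_sum[OF assms(1)] by metis
  with assms(1) show ?thesis by (simp add: poly_linear_def)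
qed

lemma poly_linear_mult_right: "poly_linear (\<lambda>h. h * a)"
  by (simp add: poly_linear_def algebra_simps)

lemma poly_linear_pseudo_mod:
  fixes g :: "'a::idom poly"
  assumes g: "monic g"
  shows "poly_linear (\<lambda>h. pseudo_mod h g)"
  unfolding poly_linear_def
proof (intro conjI allI)
  have high: "coeff (pseudo_mod p g) k = 0" if "degree g \<le> k" for p k
    using coeff_pseudo_mod_monic_eq_0[OF g that] .
  fix p q :: "'a poly" and c :: 'a
  have "g dvd (p - pseudo_mod p g) + (q - pseudo_mod q g)"
    by (intro dvd_add pseudo_mod_monic_dvd[OF g])
  then show "pseudo_mod (p + q) g = pseudo_mod p g + pseudo_mod q g"
    by (auto intro!: pseudo_mod_monic_eqI[OF g] simp: high algebra_simps)
  have "g dvd smult c (p - pseudo_mod p g)"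
    by (intro dvd_smult pseudo_mod_monic_dvd[OF g])
  then show "pseudo_mod (smult c p) g = smult c (pseudo_mod p g)"
    by (auto intro!: pseudo_mod_monic_eqI[OF g] simp: high smult_diff_right)
qed

lemma poly_linear_comp:
  "poly_linear \<phi> \<Longrightarrow> poly_linear \<psi> \<Longrightarrow> poly_linear (\<phi> \<circ> \<psi>)"
  by (simp add: poly_linear_def)

definition coeffs_mat :: "nat \<Rightarrow> nat \<Rightarrow> (nat \<Rightarrow> 'a::zero poly) \<Rightarrow> 'a mat" where
  "coeffs_mat m n u = mat m n (\<lambda>(i, j). coeff (u j) i)"

lemma coeffs_mat_carrier [simp]: "coeffs_mat m n u \<in> carrier_mat m n"
  and dim_coeffs_mat [simp]: "dim_row (coeffs_mat m n u) = m" "dim_col (coeffs_mat m n u) = n"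
  and index_coeffs_mat [simp]: "i < m \<Longrightarrow> j < n \<Longrightarrow> coeffs_mat m n u $$ (i, j) = coeff (u j) i"
  by (simp_all add: coeffs_mat_def)

lemma coeffs_mat_mult:
  fixes w :: "nat \<Rightarrow> 'a::comm_ring_1 poly"
  assumes "A \<in> carrier_mat k n"
  shows "coeffs_mat m k w * A = coeffs_mat m n (\<lambda>j. \<Sum>l<k. smult (A $$ (l, j)) (w l))"
  by (rule eq_matI)
     (use assms in \<open>auto simp: scalar_prod_def coeff_sum lessThan_atLeast0 mult.commute\<close>)

lemma coeffs_mat_mult_coeffs_mat:
  fixes u :: "nat \<Rightarrow> 'a::comm_ring_1 poly"
  assumes "poly_linear \<phi>" and "\<And>j i. j < n \<Longrightarrow> k \<le> i \<Longrightarrow> coeff (u j) i = 0"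
  shows "coeffs_mat m k (\<lambda>l. \<phi> (monom 1 l)) * coeffs_mat k n u = coeffs_mat m n (\<lambda>j. \<phi> (u j))"
  unfolding coeffs_mat_mult[OF coeffs_mat_carrier]
  by (rule eq_matI) (use poly_linear_monom_expansion[OF assms(1) assms(2)] in auto)

lemma det_coeffs_mat_unitriangular:
  fixes u :: "nat \<Rightarrow> 'a::comm_ring_1 poly"
  assumes "\<And>j i. j < i \<Longrightarrow> i < n \<Longrightarrow> coeff (u j) i = 0" and "\<And>j. j < n \<Longrightarrow> coeff (u j) j = 1"
  shows "det (coeffs_mat n n u) = 1"
proof -
  have "upper_triangular (coeffs_mat n n u)"
    using assms(1) by (auto simp: upper_triangular_def)
  then have "det (coeffs_mat n n u) = (\<Prod>i = 0..<n. coeff (u i) i)"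
    by (simp add: det_upper_triangular[of _ n] prod_list_diag_prod)
  with assms(2) show ?thesis by simp
qed

lemma det_lower_unitriangular:
  fixes A :: "'a::comm_ring_1 mat"
  assumes A: "A \<in> carrier_mat n n"
    and "\<And>i j. i < j \<Longrightarrow> j < n \<Longrightarrow> A $$ (i, j) = 0" and "\<And>i. i < n \<Longrightarrow> A $$ (i, i) = 1"
  shows "det A = 1"
proof -
  have "det A = (\<Prod>i = 0..<n. A $$ (i, i))"
    using det_lower_triangular[OF assms(2) A] A by (simp add: prod_list_diag_prod)
  with assms(3) show ?thesis by simp
qed

lemma det_reverse_rows_cols:
  fixes A :: "'a::comm_ring_1 mat"
  assumes A: "A \<in> carrier_mat n n"
  shows "det (mat n n (\<lambda>(i, j). A $$ (n - 1 - i, n - 1 - j))) = det A"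
proof -
  define p where "p i = (if i < n then n - 1 - i else i)" for i
  have p: "p permutes {0..<n}"
    by (rule bij_imp_permutes) (auto simp: p_def intro!: bij_betw_byWitness[where f' = p])
  define B where "B = mat n n (\<lambda>(i, j). A $$ (p i, j))"
  have B: "B \<in> carrier_mat n n" and Bt: "transpose_mat B \<in> carrier_mat n n"
    by (simp_all add: B_def)
  have "transpose_mat (mat n n (\<lambda>(i, j). transpose_mat B $$ (p i, j)))
      = mat n n (\<lambda>(i, j). A $$ (n - 1 - i, n - 1 - j))"
    by (rule eq_matI) (auto simp: B_def p_def)
  moreover have "det (mat n n (\<lambda>(i, j). transpose_mat B $$ (p i, j))) = det A"
    using det_permute_rows[OF Bt p] det_permute_rows[OF A p]
    by (simp add: B_def det_transpose[OF B, unfolded B_def] flip: of_int_mult mult.assoc)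
  ultimately show ?thesis by (metis det_transpose mat_carrier)
qed

section \<open>The resultant as the determinant of multiplication modulo a monic polynomial\<close>

lemma coeff_monom_Suc_mult_Suc:
  fixes p :: "'a::comm_semiring_1 poly"
  shows "coeff (monom 1 (Suc a) * p) (Suc b) = coeff (monom 1 a * p) b"
  by (simp add: coeff_monom_mult)

lemma resultant_eq_det_coeffs_mat:
  fixes p q :: "'a::comm_ring_1 poly"
  defines "m \<equiv> degree p" and "n \<equiv> degree q"
  shows "resultant p q = det (coeffs_mat (m + n) (m + n)
    (\<lambda>j. if j < m then monom 1 j * q else monom 1 (j - m) * p))"
proof -
  let ?N = "m + n" and ?S = "sylvester_mat p q"
  let ?C = "coeffs_mat ?N ?N (\<lambda>j. if j < m then monom 1 j * q else monom 1 (j - m) * p)"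
  have S: "?S \<in> carrier_mat ?N ?N" unfolding m_def n_def by (rule sylvester_carrier_mat)
  have "transpose_mat ?C = mat ?N ?N (\<lambda>(i, j). ?S $$ (?N - 1 - i, ?N - 1 - j))"
  proof (rule eq_matI)
    fix i j assume "i < dim_row (mat ?N ?N (\<lambda>(i, j). ?S $$ (?N - 1 - i, ?N - 1 - j)))"
      and "j < dim_col (mat ?N ?N (\<lambda>(i, j). ?S $$ (?N - 1 - i, ?N - 1 - j)))"
    then have i: "i < ?N" and j: "j < ?N" by auto
    have col: "?N - (?N - 1 - j) = Suc j" using j by linarith
    have S_ij: "?S $$ (?N - 1 - i, ?N - 1 - j) = (if ?N - 1 - i < n
        then coeff (monom 1 (n - (?N - 1 - i)) * p) (Suc j)
        else coeff (monom 1 (?N - (?N - 1 - i)) * q) (Suc j))"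
      using sylvester_index_mat2[of "?N - 1 - i" p q "?N - 1 - j"] i j
      unfolding col by (simp add: m_def n_def)
    show "transpose_mat ?C $$ (i, j) = mat ?N ?N (\<lambda>(i, j). ?S $$ (?N - 1 - i, ?N - 1 - j)) $$ (i, j)"
    proof (cases "i < m")
      case True
      then have "\<not> ?N - 1 - i < n" "?N - (?N - 1 - i) = Suc i" by linarith+
      with True i j S_ij show ?thesis by (simp add: coeff_monom_Suc_mult_Suc)
    next
      case False
      then have "?N - 1 - i < n" "n - (?N - 1 - i) = Suc (i - m)" using i by linarith+
      with False i j S_ij show ?thesis by (simp add: coeff_monom_Suc_mult_Suc)
    qed
  qed auto
  then show ?thesis
    using det_transpose[of ?C ?N] det_reverse_rows_cols[OF S] by (simp add: resultant_def)
qed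

lemma sum_lessThan_add_if_le:
  fixes f :: "nat \<Rightarrow> 'a::comm_monoid_add"
  shows "(\<Sum>l<m + n. if m \<le> l then f (l - m) else 0) = (\<Sum>k<n. f k)"
  by (induction n) auto

lemma det_coeffs_mat_reduce_columns:
  fixes p :: "'a::comm_ring_1 poly"
  assumes Q: "\<And>j k. j < m \<Longrightarrow> n \<le> k \<Longrightarrow> coeff (Q j) k = 0"
  shows "det (coeffs_mat (m + n) (m + n) (\<lambda>j. if j < m then u j - Q j * p else monom 1 (j - m) * p))
       = det (coeffs_mat (m + n) (m + n) (\<lambda>j. if j < m then u j else monom 1 (j - m) * p))"
proof -
  let ?N = "m + n"
  define w where "w j = (if j < m then u j else monom 1 (j - m) * p)" for j
  define V where "V = mat ?N ?N (\<lambda>(l, j).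
    (if l = j then 1 else 0) - (if j < m \<and> m \<le> l then coeff (Q j) (l - m) else 0))"
  have V: "V \<in> carrier_mat ?N ?N" by (simp add: V_def)
  have col: "(\<Sum>l<?N. smult (V $$ (l, j)) (w l))
      = (if j < m then u j - Q j * p else monom 1 (j - m) * p)" if j: "j < ?N" for j
  proof -
    have "smult (V $$ (l, j)) (w l) = (if l = j then w l else 0)
        - (if j < m \<and> m \<le> l then smult (coeff (Q j) (l - m)) (w l) else 0)" if "l < ?N" for l
      using that j by (auto simp: V_def smult_diff_left)
    then have "(\<Sum>l<?N. smult (V $$ (l, j)) (w l)) = (\<Sum>l<?N. (if l = j then w l else 0)
        - (if j < m \<and> m \<le> l then smult (coeff (Q j) (l - m)) (w l) else 0))"
      by (intro sum.cong) auto
    also have "\<dots> = (\<Sum>l<?N. if l = j then w l else 0)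
        - (\<Sum>l<?N. if j < m \<and> m \<le> l then smult (coeff (Q j) (l - m)) (w l) else 0)"
      by (rule sum_subtractf)
    also have "(\<Sum>l<?N. if l = j then w l else 0) = w j" using j by simp
    also have "(\<Sum>l<?N. if j < m \<and> m \<le> l then smult (coeff (Q j) (l - m)) (w l) else 0)
        = (if j < m then Q j * p else 0)"
    proof (cases "j < m")
      case True
      have "(\<Sum>l<?N. if m \<le> l then smult (coeff (Q j) (l - m)) (w l) else 0)
          = (\<Sum>k<n. smult (coeff (Q j) k) (monom 1 k * p))"
        using sum_lessThan_add_if_le[where f = "\<lambda>k. smult (coeff (Q j) k) (monom 1 k * p)"]
        by (simp add: w_def cong: if_cong)
      also have "\<dots> = Q j * p"
        by (rule poly_linear_monom_expansion[OF poly_linear_mult_right, symmetric]) (rule Q[OF True])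
      finally show ?thesis using True by simp
    qed simp
    finally show ?thesis by (simp add: w_def)
  qed
  have "coeffs_mat ?N ?N w * V
      = coeffs_mat ?N ?N (\<lambda>j. if j < m then u j - Q j * p else monom 1 (j - m) * p)"
    unfolding coeffs_mat_mult[OF V] by (rule eq_matI) (simp_all add: col)
  moreover have "det V = 1"
    by (rule det_lower_unitriangular[OF V]) (auto simp: V_def)
  ultimately show ?thesis
    using det_mult[OF coeffs_mat_carrier V, of w] by (simp add: w_def[abs_def])
qed

lemma det_coeffs_mat_monic_tail:
  fixes p :: "'a::idom poly"
  defines "m \<equiv> degree p"
  assumes p: "monic p" and u: "\<And>j i. j < m \<Longrightarrow> m \<le> i \<Longrightarrow> coeff (u j) i = 0"
  shows "det (coeffs_mat (m + n) (m + n) (\<lambda>j. if j < m then u j else monom 1 (j - m) * p))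
       = det (coeffs_mat m m u)"
proof -
  define A2 where "A2 = coeffs_mat m n (\<lambda>j. monom 1 j * p)"
  define A4 where "A4 = coeffs_mat n n (\<lambda>j. poly_shift m (monom 1 j * p))"
  have "coeffs_mat (m + n) (m + n) (\<lambda>j. if j < m then u j else monom 1 (j - m) * p)
      = four_block_mat (coeffs_mat m m u) A2 (0\<^sub>m n m) A4"
    by (rule eq_matI) (auto simp: A2_def A4_def coeff_poly_shift u)
  moreover have "det A4 = 1"
    unfolding A4_def
    by (rule det_coeffs_mat_unitriangular)
       (auto simp: coeff_poly_shift coeff_monom_mult m_def p intro: coeff_eq_0)
  ultimately show ?thesis
    unfolding A2_def A4_def
    by (simp add: det_four_block_mat_lower_left_zero[OF coeffs_mat_carrier coeffs_mat_carrier refl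
          coeffs_mat_carrier])
qed

definition mult_mod_mat :: "'a::idom poly \<Rightarrow> 'a poly \<Rightarrow> 'a mat" where
  "mult_mod_mat p q = coeffs_mat (degree p) (degree p) (\<lambda>k. pseudo_mod (monom 1 k * q) p)"

lemma resultant_eq_det_mult_mod_mat:
  fixes p q :: "'a::idom poly"
  assumes p: "monic p"
  shows "resultant p q = det (mult_mod_mat p q)"
proof -
  let ?m = "degree p" and ?n = "degree q"
  define r where "r j = pseudo_mod (monom 1 j * q) p" for j
  define Q where "Q j = fst (pseudo_divmod (monom 1 j * q) p)" for j
  have div: "monom 1 j * q - r j = p * Q j" for j
    using pseudo_divmod_monic[OF p, of "monom 1 j * q" "Q j" "r j"]
    by (simp add: Q_def r_def pseudo_mod_def diff_eq_eq)
  have Q: "coeff (Q j) k = 0" if j: "j < ?m" and k: "?n \<le> k" for j k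
  proof (cases "Q j = 0")
    case False
    have "degree (r j) \<le> ?m - 1"
      by (rule degree_le) (use j in \<open>auto simp: r_def coeff_pseudo_mod_monic_eq_0[OF p]\<close>)
    moreover have "degree (monom 1 j * q) \<le> j + ?n"
      using degree_mult_le[of "monom 1 j" q] degree_monom_le[of "1::'a" j] by linarith
    ultimately have "degree (monom 1 j * q - r j) < ?m + ?n"
      using degree_diff_le_max[of "monom 1 j * q" "r j"] j by linarith
    moreover have "p \<noteq> 0" using p by auto
    ultimately have "degree (Q j) < ?n" using False by (simp add: div degree_mult_eq)
    then show ?thesis using k by (simp add: coeff_eq_0)
  qed simp
  have red: "monom 1 j * q - Q j * p = r j" for j
    using div[of j] by (simp add: algebra_simps)
  have "resultant p q = det (coeffs_mat (?m + ?n) (?m + ?n)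
      (\<lambda>j. if j < ?m then monom 1 j * q else monom 1 (j - ?m) * p))"
    by (rule resultant_eq_det_coeffs_mat)
  also have "\<dots> = det (coeffs_mat (?m + ?n) (?m + ?n)
      (\<lambda>j. if j < ?m then monom 1 j * q - Q j * p else monom 1 (j - ?m) * p))"
    by (rule det_coeffs_mat_reduce_columns[OF Q, symmetric])
  also have "\<dots> = det (coeffs_mat ?m ?m r)"
    unfolding red by (rule det_coeffs_mat_monic_tail[OF p])
      (simp add: r_def coeff_pseudo_mod_monic_eq_0[OF p])
  finally show ?thesis by (simp add: mult_mod_mat_def r_def[abs_def])
qed

lemma mult_mod_mat_mult:
  fixes p a b :: "'a::idom poly"
  assumes p: "monic p"
  shows "mult_mod_mat p (a * b) = mult_mod_mat p a * mult_mod_mat p b"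
proof -
  have lin: "poly_linear (\<lambda>h. pseudo_mod (h * a) p)"
    using poly_linear_comp[OF poly_linear_pseudo_mod[OF p] poly_linear_mult_right] by (simp add: o_def)
  have "mult_mod_mat p a * mult_mod_mat p b
      = coeffs_mat (degree p) (degree p) (\<lambda>k. pseudo_mod (pseudo_mod (monom 1 k * b) p * a) p)"
    unfolding mult_mod_mat_def
    by (rule coeffs_mat_mult_coeffs_mat[OF lin]) (simp add: coeff_pseudo_mod_monic_eq_0[OF p])
  also have "\<dots> = mult_mod_mat p (a * b)"
  proof -
    have "pseudo_mod (monom 1 k * b) p * a - monom 1 k * (a * b)
        = - ((monom 1 k * b - pseudo_mod (monom 1 k * b) p) * a)" for k
      by (simp add: algebra_simps)
    then have "p dvd pseudo_mod (monom 1 k * b) p * a - monom 1 k * (a * b)" for k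
      using pseudo_mod_monic_dvd[OF p] by simp
    then have "pseudo_mod (pseudo_mod (monom 1 k * b) p * a) p = pseudo_mod (monom 1 k * (a * b)) p" for k
      by (rule pseudo_mod_monic_cong[OF p])
    then show ?thesis by (simp add: mult_mod_mat_def)
  qed
  finally show ?thesis ..
qed

lemma resultant_mult_right:
  fixes p a b :: "'a::idom poly"
  assumes "monic p"
  shows "resultant p (a * b) = resultant p a * resultant p b"
  unfolding resultant_eq_det_mult_mod_mat[OF assms] mult_mod_mat_mult[OF assms]
  by (rule det_mult[of _ "degree p"]) (simp_all add: mult_mod_mat_def)

lemma resultant_prod_list_left:
  fixes g :: "'a::idom poly"
  assumes g: "monic g" and qs: "\<forall>q \<in> set qs. monic q"
  shows "resultant (prod_list qs) g = (\<Prod>q\<leftarrow>qs. resultant q g)"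
  using qs
proof (induction qs)
  case (Cons q qs)
  let ?Q = "prod_list qs"
  from Cons.prems have "monic q" and qs': "\<forall>q \<in> set qs. monic q" by auto
  moreover have "monic ?Q" by (rule monic_prod_list) (use qs' in auto)
  ultimately
  have "q \<noteq> 0" "?Q \<noteq> 0" by (metis leading_coeff_0_iff zero_neq_one)+
  then have deg: "degree (q * ?Q) = degree q + degree ?Q" by (rule degree_mult_eq)
  have "resultant (q * ?Q) g = (-1) ^ (degree (q * ?Q) * degree g) * resultant g (q * ?Q)"
    by (rule resultant_swap)
  also have "\<dots> = ((-1) ^ (degree q * degree g) * resultant g q)
      * ((-1) ^ (degree ?Q * degree g) * resultant g ?Q)"
    by (simp add: resultant_mult_right[OF g] deg algebra_simps power_add)
  also have "\<dots> = resultant q g * resultant ?Q g"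
    by (simp add: resultant_swap[of q g] resultant_swap[of ?Q g])
  finally show ?case using Cons.IH qs' by simp
qed simp
section \<open>The map \<open>\<Psi>\<close>\<close>

lemma degree_prod_list_monic:
  fixes fs :: "'a::idom poly list"
  assumes "\<forall>f \<in> set fs. monic f"
  shows "degree (prod_list fs) = sum_list (map degree fs)"
proof -
  have "\<forall>f \<in> set fs. f \<noteq> 0" using assms by auto
  then show ?thesis by (intro degree_prod_list_eq) auto
qed


lemma block_off_0 [simp]: "block_off fs 0 = 0"
  by (simp add: block_off_def)

lemma block_off_Cons_Suc [simp]: "block_off (g # gs) (Suc i) = degree g + block_off gs i"
  by (simp add: block_off_def)

lemma block_off_mono: "i \<le> j \<Longrightarrow> block_off fs i \<le> block_off fs j"
proof (induction fs arbitrary: i j)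
  case (Cons g gs)
  then show ?case by (cases i; cases j) auto
qed (simp add: block_off_def)

lemma ex1_block_index:
  assumes "r < sum_list (map degree fs)"
  shows "\<exists>!i. i < length fs \<and> block_off fs i \<le> r \<and> r < block_off fs (Suc i)"
proof (rule ex_ex1I)
  show "\<exists>i. i < length fs \<and> block_off fs i \<le> r \<and> r < block_off fs (Suc i)"
    using assms
  proof (induction fs arbitrary: r)
    case (Cons g gs)
    show ?case
    proof (cases "r < degree g")
      case False
      with Cons.prems have "r - degree g < sum_list (map degree gs)" by auto
      with Cons.IH obtain i where "i < length gs"
        "block_off gs i \<le> r - degree g" "r - degree g < block_off gs (Suc i)" by blast
      with False show ?thesis by (intro exI[of _ "Suc i"]) auto
    qed auto
  qed simp
  show "i = j" if "i < length fs \<and> block_off fs i \<le> r \<and> r < block_off fs (Suc i)"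
    and "j < length fs \<and> block_off fs j \<le> r \<and> r < block_off fs (Suc j)" for i j
    using that block_off_mono[of "Suc i" j fs] block_off_mono[of "Suc j" i fs] by fastforce
qed

text \<open>\<open>\<Psi>\<close> is modelled as a map \<open>R[X] \<rightarrow> R[X]\<close>: the remainder modulo \<open>f\<^sub>i\<close> occupies the
  coefficients from \<open>block_off fs i\<close> on, so the coefficient vector of \<open>psi_poly fs h\<close>
  is the coordinate vector of \<open>\<Psi> h\<close> in the concatenated standard bases.\<close>
fun psi_poly :: "'a::idom poly list \<Rightarrow> 'a poly \<Rightarrow> 'a poly" where
  "psi_poly [] h = 0"
| "psi_poly (g # gs) h = pseudo_mod h g + monom 1 (degree g) * psi_poly gs h"

lemma coeff_psi_poly:
  assumes "\<forall>f \<in> set fs. monic f"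
    and "i < length fs" "block_off fs i \<le> r" "r < block_off fs (Suc i)"
  shows "coeff (psi_poly fs h) r = coeff (pseudo_mod h (fs ! i)) (r - block_off fs i)"
  using assms
proof (induction fs arbitrary: i r)
  case (Cons g gs)
  show ?case
  proof (cases i)
    case 0
    with Cons.prems show ?thesis by (simp add: coeff_monom_mult)
  next
    case (Suc i')
    with Cons.prems have "coeff (pseudo_mod h g) r = 0"
      by (intro coeff_pseudo_mod_monic_eq_0) auto
    with Suc Cons.prems Cons.IH[of i' "r - degree g"] show ?thesis
      by (simp add: coeff_monom_mult)
  qed
qed simp

lemma psi_mat_eq_coeffs_mat:
  assumes "\<forall>f \<in> set fs. monic f"
  defines "N \<equiv> sum_list (map degree fs)"
  shows "psi_mat fs = coeffs_mat N N (\<lambda>c. psi_poly fs (monom 1 c))"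
proof (rule eq_matI)
  fix r c assume "r < dim_row (coeffs_mat N N (\<lambda>c. psi_poly fs (monom 1 c)))"
    and "c < dim_col (coeffs_mat N N (\<lambda>c. psi_poly fs (monom 1 c)))"
  then have r: "r < N" and c: "c < N" by auto
  obtain i where i: "i < length fs \<and> block_off fs i \<le> r \<and> r < block_off fs (Suc i)"
    using ex1_block_index[of r fs] r by (auto simp: N_def)
  then have "(THE i. i < length fs \<and> block_off fs i \<le> r \<and> r < block_off fs (Suc i)) = i"
    using ex1_block_index[of r fs] r by (intro the1_equality) (auto simp: N_def)
  with i r c coeff_psi_poly[OF assms(1), where i = i and r = r and h = "monom 1 c"]
  show "psi_mat fs $$ (r, c) = coeffs_mat N N (\<lambda>c. psi_poly fs (monom 1 c)) $$ (r, c)"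
    by (simp add: psi_mat_def N_def Let_def)
qed (simp_all add: psi_mat_def N_def)

lemma poly_linear_psi_poly:
  assumes "\<forall>f \<in> set fs. monic f"
  shows "poly_linear (psi_poly fs)"
  using assms
proof (induction fs)
  case Nil
  then show ?case by (simp add: poly_linear_def)
next
  case (Cons g gs)
  then have "poly_linear (\<lambda>h. pseudo_mod h g)" "poly_linear (psi_poly gs)"
    by (auto intro: poly_linear_pseudo_mod)
  then show ?case by (simp add: poly_linear_def algebra_simps smult_add_right)
qed

lemma psi_poly_cong:
  assumes "\<forall>f \<in> set fs. monic f" and "prod_list fs dvd p - q"
  shows "psi_poly fs p = psi_poly fs q"
  using assms
proof (induction fs)
  case (Cons g gs)
  then have "g dvd p - q" "prod_list gs dvd p - q"
    by (auto intro: dvd_mult_left dvd_mult_right)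
  with Cons show ?case by (simp add: pseudo_mod_monic_cong)
qed simp

definition split_basis :: "'a::comm_semiring_1 poly \<Rightarrow> nat \<Rightarrow> 'a poly" where
  "split_basis g c = (if c < degree g then monom 1 c else monom 1 (c - degree g) * g)"

lemma coeff_split_basis_eq_0:
  fixes g :: "'a::comm_semiring_1 poly"
  assumes "c < i"
  shows "coeff (split_basis g c) i = 0"
  using assms by (auto simp: split_basis_def coeff_monom_mult intro: coeff_eq_0)

lemma det_coeffs_mat_split_basis:
  fixes g :: "'a::comm_ring_1 poly"
  assumes "monic g"
  shows "det (coeffs_mat n n (split_basis g)) = 1"
  by (rule det_coeffs_mat_unitriangular)
     (auto simp: coeff_split_basis_eq_0 split_basis_def coeff_monom_mult assms intro: coeff_eq_0)

lemma coeff_psi_poly_Cons_split_basis: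
  fixes g :: "'a::idom poly"
  assumes g: "monic g"
  shows "coeff (psi_poly (g # gs) (split_basis g c)) r = (if r < degree g
    then if r = c then 1 else 0 else coeff (psi_poly gs (split_basis g c)) (r - degree g))"
proof (cases "c < degree g")
  case True
  then have "pseudo_mod (split_basis g c) g = monom 1 c"
    by (simp add: split_basis_def pseudo_mod_monic_small[OF g] degree_monom_eq)
  with True show ?thesis by (simp add: coeff_monom_mult split_basis_def)
next
  case False
  then have "pseudo_mod (split_basis g c) g = 0"
    by (simp add: split_basis_def pseudo_mod_monic_multiple[OF g])
  with False show ?thesis by (auto simp: coeff_monom_mult)
qed

lemma psi_mat_Cons_mult_split_basis:
  fixes g :: "'a::idom poly"
  assumes g: "monic g" and gs: "\<forall>f \<in> set gs. monic f"
  defines "d \<equiv> degree g" and "D \<equiv> sum_list (map degree gs)"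
  shows "psi_mat (g # gs) * coeffs_mat (d + D) (d + D) (split_basis g)
    = four_block_mat (1\<^sub>m d) (0\<^sub>m d D) (coeffs_mat D d (\<lambda>c. psi_poly gs (monom 1 c)))
        (coeffs_mat D D (\<lambda>k. psi_poly gs (monom 1 k * g)))" (is "_ = ?B")
proof -
  have fs: "\<forall>f \<in> set (g # gs). monic f" using g gs by auto
  have P: "psi_mat (g # gs) = coeffs_mat (d + D) (d + D) (\<lambda>c. psi_poly (g # gs) (monom 1 c))"
    using psi_mat_eq_coeffs_mat[OF fs] by (simp add: d_def D_def)
  have "psi_mat (g # gs) * coeffs_mat (d + D) (d + D) (split_basis g)
      = coeffs_mat (d + D) (d + D) (\<lambda>c. psi_poly (g # gs) (split_basis g c))"
    unfolding P by (rule coeffs_mat_mult_coeffs_mat[OF poly_linear_psi_poly[OF fs]])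
      (simp add: coeff_split_basis_eq_0)
  also have "\<dots> = ?B"
  proof (rule eq_matI)
    fix r c assume "r < dim_row ?B" and "c < dim_col ?B"
    then have r: "r < d + D" and c: "c < d + D" by simp_all
    show "coeffs_mat (d + D) (d + D) (\<lambda>c. psi_poly (g # gs) (split_basis g c)) $$ (r, c)
        = ?B $$ (r, c)"
      unfolding index_coeffs_mat[OF r c] coeff_psi_poly_Cons_split_basis[OF g]
      using r c by (auto simp: split_basis_def d_def)
  qed simp_all
  finally show ?thesis .
qed

lemma psi_mat_mult_mult_mod_mat:
  fixes g :: "'a::idom poly"
  assumes gs: "\<forall>f \<in> set gs. monic f"
  defines "D \<equiv> sum_list (map degree gs)"
  shows "psi_mat gs * mult_mod_mat (prod_list gs) g
    = coeffs_mat D D (\<lambda>k. psi_poly gs (monom 1 k * g))"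
proof -
  let ?G = "prod_list gs"
  have G: "monic ?G" by (rule monic_prod_list) (use gs in auto)
  have "psi_mat gs * mult_mod_mat ?G g
      = coeffs_mat D D (\<lambda>k. psi_poly gs (pseudo_mod (monom 1 k * g) ?G))"
    unfolding psi_mat_eq_coeffs_mat[OF gs] mult_mod_mat_def degree_prod_list_monic[OF gs]
      D_def[symmetric]
    by (rule coeffs_mat_mult_coeffs_mat[OF poly_linear_psi_poly[OF gs]])
       (simp add: coeff_pseudo_mod_monic_eq_0[OF G, unfolded degree_prod_list_monic[OF gs]] D_def)
  moreover have "psi_poly gs (pseudo_mod (monom 1 k * g) ?G) = psi_poly gs (monom 1 k * g)" for k
    using pseudo_mod_monic_dvd[OF G, of "monom 1 k * g"]
    by (intro psi_poly_cong[OF gs]) (metis dvd_minus_iff minus_diff_eq)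
  ultimately show ?thesis by simp
qed

lemma det_psi_mat_Cons:
  fixes g :: "'a::idom poly"
  assumes g: "monic g" and gs: "\<forall>f \<in> set gs. monic f"
  shows "det (psi_mat (g # gs)) = det (psi_mat gs) * resultant (prod_list gs) g"
proof -
  let ?d = "degree g" and ?D = "sum_list (map degree gs)" and ?G = "prod_list gs"
  have G: "monic ?G" by (rule monic_prod_list) (use gs in auto)
  have M: "mult_mod_mat ?G g \<in> carrier_mat ?D ?D"
    by (simp add: mult_mod_mat_def degree_prod_list_monic[OF gs])
  have PM: "psi_mat gs * mult_mod_mat ?G g \<in> carrier_mat ?D ?D"
    by (rule mult_carrier_mat[OF _ M]) (simp add: psi_mat_def)
  have "det (psi_mat (g # gs))
      = det (psi_mat (g # gs) * coeffs_mat (?d + ?D) (?d + ?D) (split_basis g))"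
    by (subst det_mult[of _ "?d + ?D"]) (simp_all add: psi_mat_def det_coeffs_mat_split_basis[OF g])
  also have "\<dots> = det (psi_mat gs * mult_mod_mat ?G g)"
    unfolding psi_mat_Cons_mult_split_basis[OF g gs] psi_mat_mult_mult_mod_mat[OF gs, symmetric]
    using det_four_block_mat_upper_right_zero[OF one_carrier_mat refl coeffs_mat_carrier PM]
    by simp
  also have "\<dots> = det (psi_mat gs) * resultant ?G g"
    unfolding resultant_eq_det_mult_mod_mat[OF G] using M
    by (rule det_mult[of _ ?D, rotated]) (simp add: psi_mat_def)
  finally show ?thesis .
qed

theorem theoremA3:
  fixes fs :: "'a::idom poly list"
  assumes monic: "\<forall>g \<in> set fs. lead_coeff g = 1"
  shows "det (psi_mat fs) = (\<Prod>j < length fs. \<Prod>i < j. resultant (fs ! j) (fs ! i))"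
  using monic
proof (induction fs)
  case Nil
  show ?case by (simp add: psi_mat_def det_def)
next
  case (Cons g gs)
  then have "det (psi_mat (g # gs))
      = (\<Prod>j < length gs. \<Prod>i < j. resultant (gs ! j) (gs ! i)) * (\<Prod>f\<leftarrow>gs. resultant f g)"
    by (simp add: det_psi_mat_Cons resultant_prod_list_left)
  then show ?case
    by (simp add: prod.list_conv_set_nth prod.lessThan_Suc_shift prod.distrib atLeast0LessThan
        del: prod.lessThan_Suc)
qed

end
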